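(* Let $K$ be an algebraically closed field of characteristic three, and let $G$ be a small finite subgroup of $\mathrm{SL}(3,K)$ of order $3^r$. Then $G\cong C_3^r$ (the direct product of $r$ copies of the cyclic group of order three).
   Context: An element $g\in G\subset\mathrm{GL}(3,K)$ is a pseudo-reflection if its fixed subspace in $K^3$ has dimension $2$; $G$ is small if it contains no pseudo-reflection. *)

theory Defs
  imports "HOL-Analysis.Analysis" "HOL-Algebra.Product_Groups" "HOL-Algebra.Elementary_Groups"
begin

definition alg_closed :: "'a::field itself \<Rightarrow> bool" where
  "alg_closed _ \<longleftrightarrow>
     (\<forall>n::nat. \<forall>c::nat \<Rightarrow> 'a. n \<ge> 1 \<longrightarrow> (\<exists>x::'a. x ^ n + (\<Sum>i<n. c i * x ^ i) = 0))"

definition SL3 :: "('a::field ^ 3 ^ 3) monoid" where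
  "SL3 = \<lparr>carrier = {A. det A = 1}, mult = (**), one = mat 1\<rparr>"

definition pseudo_reflection :: "'a::field ^ 3 ^ 3 \<Rightarrow> bool" where
  "pseudo_reflection g \<longleftrightarrow> vec.dim {v :: 'a ^ 3. g *v v = v} = 2"

definition small :: "('a::field ^ 3 ^ 3) set \<Rightarrow> bool" where
  "small G \<longleftrightarrow> (\<forall>g\<in>G. \<not> pseudo_reflection g)"

end

(*
  In characteristic 3 we have (g - 1)^(3^k) = g^(3^k) - 1, so every g in a 3-group G is
  unipotent, and in dimension 3 this gives (g - 1)^3 = 0 and g^3 = 1: G has exponent 3.
  A nontrivial 3-group has a central element z \<noteq> 1. Its nilpotent part N = z - 1 cannot
  satisfy N^2 = 0, for then ker N would be a plane fixed by z and z a pseudo-reflection.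
  Hence N is a regular nilpotent, whose centralizer consists of the polynomials in N and is
  commutative; G centralizes z, hence N, so G is abelian. An abelian group of order 3^r and
  exponent 3 is the product of r copies of C_3, built by extending embeddings of C_3^n one
  factor at a time.
*)
theory Submission
  imports Defs "HOL-Algebra.Group_Action" "HOL-Algebra.Multiplicative_Group"
begin

lemma SL3_simps [simp]:
  "carrier SL3 = {A. det A = 1}" "mult SL3 = (**)" "one SL3 = mat 1"
  by (simp_all add: SL3_def)

lemma group_SL3: "group (SL3 :: ('a::field ^ 3 ^ 3) monoid)"
proof (rule groupI)
  fix A :: "'a ^ 3 ^ 3"
  assume "A \<in> carrier SL3"
  then have det_A: "det A = 1" by simp
  then obtain B where B: "A ** B = mat 1" "B ** A = mat 1"
    using invertible_det_nz[of A] unfolding invertible_def by auto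
  have "det B * det A = 1" using B det_mul[of B A] by simp
  with det_A B show "\<exists>B\<in>carrier SL3. B \<otimes>\<^bsub>SL3\<^esub> A = \<one>\<^bsub>SL3\<^esub>" by auto
qed (auto simp: det_mul matrix_mul_assoc)

primrec matrix_power :: "'a::semiring_1 ^ 'n ^ 'n \<Rightarrow> nat \<Rightarrow> 'a ^ 'n ^ 'n" where
  "matrix_power A 0 = mat 1"
| "matrix_power A (Suc n) = matrix_power A n ** A"

lemma nat_pow_SL3: "A [^]\<^bsub>SL3\<lparr>carrier := G\<rparr>\<^esub> (n::nat) = matrix_power A n"
  by (induction n) (simp_all add: SL3_def)

lemma matrix_power_add: "matrix_power A (m + n) = matrix_power A m ** matrix_power A n"
  by (induction n) (simp_all add: matrix_mul_assoc)

lemma matrix_power_mult: "matrix_power A (m * n) = matrix_power (matrix_power A m) n"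
proof (induction n)
  case (Suc n)
  have "m * Suc n = m * n + m" by simp
  then show ?case using Suc by (simp only: matrix_power_add matrix_power.simps)
qed simp

lemma matrix_power_3: "matrix_power A 3 = A ** A ** A"
  by (simp add: numeral_3_eq_3)

lemma matrix_add_rdistrib: "((A::'a::semiring_1^'n^'m) + B) ** C = A ** C + B ** C"
  by (simp add: matrix_matrix_mult_def vec_eq_iff distrib_right sum.distrib)

lemma matrix_power_3_add_one:
  fixes N :: "'a::comm_ring_1 ^ 'n ^ 'n"
  assumes "(3::'a) = 0"
  shows "matrix_power (N + mat 1) 3 = matrix_power N 3 + mat 1"
proof -
  have "x + x + x = 3 * x" for x :: 'a
    by (simp add: algebra_simps)
  then have triple: "N + N + N = 0" for N :: "'a ^ 'n ^ 'n"
    using assms by (simp add: vec_eq_iff)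
  have "matrix_power (N + mat 1) 3 = N ** N ** N + (N ** N + N ** N + N ** N) + (N + N + N) + mat 1"
    unfolding matrix_power_3 matrix_add_ldistrib matrix_add_rdistrib matrix_mul_lid matrix_mul_rid
    by (simp only: add_ac)
  also have "\<dots> = matrix_power N 3 + mat 1"
    by (simp only: triple add_0_right matrix_power_3)
  finally show ?thesis .
qed

lemma matrix_power_3_power_add_one:
  fixes N :: "'a::comm_ring_1 ^ 'n ^ 'n"
  assumes "(3::'a) = 0"
  shows "matrix_power (N + mat 1) (3 ^ k) = matrix_power N (3 ^ k) + mat 1"
proof (induction k)
  case 0
  then show ?case by simp
next
  case (Suc k)
  have "matrix_power (N + mat 1) (3 ^ Suc k) = matrix_power (matrix_power (N + mat 1) (3 ^ k)) 3"
    by (simp only: matrix_power_mult power_Suc2)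
  also have "\<dots> = matrix_power (matrix_power N (3 ^ k)) 3 + mat 1"
    by (simp add: Suc matrix_power_3_add_one[OF assms])
  also have "\<dots> = matrix_power N (3 ^ Suc k) + mat 1"
    by (simp only: matrix_power_mult power_Suc2)
  finally show ?case .
qed

lemma vec_subspace_eq_UNIV:
  fixes S :: "('a::field ^ 'n) set"
  assumes "vec.subspace S" "CARD('n) \<le> vec.dim S"
  shows "S = UNIV"
proof -
  have "vec.dim S \<le> vec.dim (UNIV :: ('a ^ 'n) set)" by (rule vec.dim_subset) simp
  with assms(2) have "vec.dim S = vec.dim (UNIV :: ('a ^ 'n) set)"
    by (simp add: vec.dim_UNIV card_cart_basis)
  then have "vec.span S = UNIV" by (metis vec.dim_eq_full vec.dimension_def vec.dim_UNIV)
  with assms(1) show ?thesis by (metis vec.span_eq_iff)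
qed

text \<open>The kernels of the powers of N increase strictly until they stabilise, and since some
  power of N vanishes they can only stabilise at the whole space; so each of the first
  CARD('n) steps raises the dimension.\<close>

lemma matrix_power_card_eq_0:
  fixes N :: "'a::field ^ 'n ^ 'n"
  assumes "matrix_power N m = 0"
  shows "matrix_power N CARD('n) = 0"
proof -
  define K where "K j = {x. matrix_power N j *v x = 0}" for j
  have subspace: "vec.subspace (K j)" for j
    unfolding K_def by (rule vec.subspace_kernel)
  have span_K: "vec.span (K j) = K j" for j
    using subspace by (simp add: vec.span_eq_iff)
  have K_Suc: "K (Suc j) = {x. N *v x \<in> K j}" for j
    unfolding K_def by (simp add: matrix_vector_mul_assoc)
  have mono: "K j \<subseteq> K (i + j)" for i j
    unfolding K_def by (auto simp: matrix_power_add matrix_vector_mul_assoc[symmetric])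
  have stable: "K (i + j) = K j" if "K (Suc j) = K j" for i j
  proof (induction i)
    case (Suc i)
    then show ?case using that by (simp add: K_Suc)
  qed simp
  have "K m = UNIV" unfolding K_def using assms by simp
  have "K j = UNIV \<or> j \<le> vec.dim (K j)" for j
  proof (induction j)
    case (Suc j)
    show ?case
    proof (cases "K (Suc j) = K j")
      case True
      then have "K j = UNIV"
        using stable[OF True, of m] mono[of m j] \<open>K m = UNIV\<close> by (auto simp: add.commute)
      then show ?thesis using True by simp
    next
      case False
      then have "vec.span (K j) \<subset> vec.span (K (Suc j))"
        using mono[of j 1] by (auto simp: span_K)
      then have "vec.dim (K j) < vec.dim (K (Suc j))" by (rule vec.dim_psubset)
      then show ?thesis using Suc.IH mono[of j 1] by auto
    qed
  qed simp
  then have "K CARD('n) = UNIV" using vec_subspace_eq_UNIV[OF subspace] by blast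
  then show ?thesis unfolding K_def by (auto simp: matrix_eq)
qed

lemma unipotent_if_power_3_power_eq_1:
  fixes g :: "'a::field ^ 'n ^ 'n"
  assumes "(3::'a) = 0" "matrix_power g (3 ^ k) = mat 1"
  shows "matrix_power (g - mat 1) CARD('n) = 0"
proof -
  have "matrix_power (g - mat 1) (3 ^ k) + mat 1 = mat 1"
    using matrix_power_3_power_add_one[OF assms(1), of "g - mat 1" k] assms(2) by simp
  then show ?thesis by (intro matrix_power_card_eq_0[of _ "3 ^ k"]) simp
qed

lemma vec_subset_span_singleton_if_dim_le_1:
  fixes S :: "('a::field ^ 'n) set"
  assumes "vec.dim S \<le> 1" "u \<in> S" "u \<noteq> 0"
  shows "S \<subseteq> vec.span {u}"
proof
  fix v assume "v \<in> S"
  show "v \<in> vec.span {u}"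
  proof (rule ccontr)
    assume v: "v \<notin> vec.span {u}"
    then have "vec.independent {v, u}" "v \<noteq> u"
      using vec.independent_insertI[OF v] assms(3) vec.span_base[of u "{u}"] by auto
    then have "card {v, u} \<le> vec.dim S"
      using vec.independent_card_le_dim[of "{v, u}" S] \<open>v \<in> S\<close> assms(2) by auto
    with \<open>v \<noteq> u\<close> assms(1) show False by simp
  qed
qed

text \<open>Were ker N the line through u = N w, every x would differ from a multiple of w by an
  element of ker N, and the two vectors u, w would span the whole space.\<close>

lemma two_le_dim_kernel_square_zero_matrix:
  fixes N :: "'a::field ^ 3 ^ 3"
  assumes "N \<noteq> 0" "N ** N = 0"
  shows "2 \<le> vec.dim {x. N *v x = 0}"
proof (rule ccontr)
  define K where "K = {x. N *v x = 0}"
  assume "\<not> 2 \<le> vec.dim {x. N *v x = 0}"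
  then have dim_K: "vec.dim K \<le> 1" unfolding K_def by simp
  have image_in_K: "N *v x \<in> K" for x
    unfolding K_def using assms(2) by (simp add: matrix_vector_mul_assoc)
  obtain w where "N *v w \<noteq> 0"
    using assms(1) by (metis matrix_eq matrix_vector_mult_0)
  define u where "u = N *v w"
  have K_line: "K \<subseteq> vec.span {u}"
    using vec_subset_span_singleton_if_dim_le_1[OF dim_K] image_in_K \<open>N *v w \<noteq> 0\<close>
    unfolding u_def by blast
  have "UNIV \<subseteq> vec.span {u, w}"
  proof
    fix x :: "'a ^ 3"
    obtain k where k: "N *v x = k *s u"
      using K_line image_in_K vec.span_singleton by blast
    have "x - k *s w \<in> K"
      unfolding K_def by (simp add: matrix_vector_mult_diff_distrib vector_scalar_commute k u_def)
    then have "x - k *s w \<in> vec.span {u, w}"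
      using K_line vec.span_mono[of "{u}" "{u, w}"] by auto
    moreover have "k *s w \<in> vec.span {u, w}"
      by (simp add: vec.span_base vec.span_scale)
    ultimately have "(x - k *s w) + k *s w \<in> vec.span {u, w}"
      by (rule vec.span_add)
    then show "x \<in> vec.span {u, w}" by simp
  qed
  then have "vec.span {u, w} = UNIV" by auto
  then have "vec.dim {u, w} = 3"
    using vec.dim_span[of "{u, w}"] by (simp add: vec.dim_UNIV card_cart_basis)
  moreover have "vec.dim {u, w} \<le> 2"
    using vec.dim_le_card'[of "{u, w}"] by (cases "u = w") auto
  ultimately show False by simp
qed

lemma dim_kernel_square_zero_matrix:
  fixes N :: "'a::field ^ 3 ^ 3"
  assumes "N \<noteq> 0" "N ** N = 0"
  shows "vec.dim {x. N *v x = 0} = 2"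
proof -
  have "{x. N *v x = 0} \<noteq> UNIV"
    using assms(1) by (auto simp: matrix_eq)
  then have "vec.dim {x. N *v x = 0} \<le> 2"
    using vec_subspace_eq_UNIV[OF vec.subspace_kernel[of N]] by fastforce
  with two_le_dim_kernel_square_zero_matrix[OF assms] show ?thesis by simp
qed

lemma pseudo_reflection_if_square_zero:
  fixes g :: "'a::field ^ 3 ^ 3"
  assumes "g \<noteq> mat 1" "(g - mat 1) ** (g - mat 1) = 0"
  shows "pseudo_reflection g"
proof -
  have "{v. g *v v = v} = {v. (g - mat 1) *v v = 0}"
    by (simp add: matrix_vector_mult_diff_rdistrib)
  then show ?thesis
    using dim_kernel_square_zero_matrix[OF _ assms(2)] assms(1)
    unfolding pseudo_reflection_def by simp
qed

lemma span_cyclic_vector: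
  fixes N :: "'a::field ^ 3 ^ 3"
  assumes "N ** N ** N = 0" "N *v (N *v v) \<noteq> 0"
  shows "vec.span {v, N *v v, N *v (N *v v)} = UNIV"
proof -
  define v1 where "v1 = N *v v"
  define v2 where "v2 = N *v v1"
  have N3: "N *v (N *v (N *v x)) = 0" for x
    using assms(1) by (simp add: matrix_vector_mul_assoc matrix_mul_assoc)
  have "v2 \<noteq> 0" "N *v v2 = 0"
    using assms(2) N3 by (simp_all add: v1_def v2_def)
  have v1: "v1 \<notin> vec.span {v2}"
  proof
    assume "v1 \<in> vec.span {v2}"
    then obtain k where "v1 = k *s v2" using vec.span_singleton by blast
    then have "N *v v1 = k *s (N *v v2)" by (simp add: vector_scalar_commute)
    then have "v2 = k *s (N *v v2)" by (simp only: v2_def)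
    with \<open>v2 \<noteq> 0\<close> \<open>N *v v2 = 0\<close> show False by simp
  qed
  have v0: "v \<notin> vec.span {v1, v2}"
  proof
    assume "v \<in> vec.span {v1, v2}"
    moreover have "vec.span {v1, v2} \<subseteq> {x. (N ** N) *v x = 0}"
      using \<open>N *v v2 = 0\<close> N3
      by (intro vec.span_minimal vec.subspace_kernel)
         (auto simp: v1_def v2_def matrix_vector_mul_assoc[symmetric])
    ultimately show False
      using assms(2) by (auto simp: matrix_vector_mul_assoc)
  qed
  have "vec.independent {v, v1, v2}"
    using vec.independent_insertI[OF v0] vec.independent_insertI[OF v1] \<open>v2 \<noteq> 0\<close> by simp
  moreover have "v \<noteq> v1" "v \<noteq> v2" "v1 \<noteq> v2"
    using v0 v1 vec.span_base[of _ "{v1, v2}"] vec.span_base[of v2 "{v2}"] by auto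
  then have "card {v, v1, v2} = 3" by simp
  ultimately have "vec.span {v, v1, v2} = UNIV"
    using vec.card_eq_dim[of "{v, v1, v2}" UNIV] by (auto simp: vec.dim_UNIV card_cart_basis)
  then show ?thesis by (simp only: v1_def v2_def)
qed

text \<open>M agrees with a + b N + c N^2 on the cyclic vector v; the set of vectors where they
  agree is an N-invariant subspace, hence contains the basis v, N v, N^2 v.\<close>

lemma centralizer_of_regular_nilpotent:
  fixes N M :: "'a::field ^ 3 ^ 3"
  assumes "N ** N ** N = 0" "N ** N \<noteq> 0" "M ** N = N ** M"
  shows "\<exists>a b c. \<forall>x. M *v x = a *s x + b *s (N *v x) + c *s (N *v (N *v x))"
proof -
  have N3: "N *v (N *v (N *v x)) = 0" for x
    using assms(1) by (simp add: matrix_vector_mul_assoc matrix_mul_assoc)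
  obtain v where v: "N *v (N *v v) \<noteq> 0"
    using assms(2) by (metis matrix_eq matrix_vector_mult_0 matrix_vector_mul_assoc)
  define v1 where "v1 = N *v v"
  define v2 where "v2 = N *v v1"
  have span_UNIV: "vec.span {v, v1, v2} = UNIV"
    unfolding v1_def v2_def using span_cyclic_vector[OF assms(1) v] .
  then obtain a where "M *v v - a *s v \<in> vec.span {v1, v2}"
    using vec.span_insert[of v "{v1, v2}"] by blast
  then obtain b where "(M *v v - a *s v) - b *s v1 \<in> vec.span {v2}"
    using vec.span_insert[of v1 "{v2}"] by blast
  then obtain c where c: "(M *v v - a *s v) - b *s v1 = c *s v2"
    using vec.span_singleton by blast
  define S where "S = {x. M *v x = a *s x + b *s (N *v x) + c *s (N *v (N *v x))}"
  have "v \<in> S"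
    unfolding S_def using c by (simp add: v1_def v2_def algebra_simps)
  have N_S: "N *v x \<in> S" if "x \<in> S" for x
  proof -
    have "M *v (N *v x) = N *v (M *v x)" by (simp add: matrix_vector_mul_assoc assms(3))
    also have "\<dots> = a *s (N *v x) + b *s (N *v (N *v x)) + c *s (N *v (N *v (N *v x)))"
      using that unfolding S_def by (simp add: matrix_vector_right_distrib vector_scalar_commute)
    finally show ?thesis unfolding S_def by (simp add: N3)
  qed
  have "vec.subspace S"
    unfolding vec.subspace_def S_def
    by (auto simp: matrix_vector_right_distrib vector_scalar_commute algebra_simps vec.scale_left_commute)
  moreover have "{v, v1, v2} \<subseteq> S"
    using \<open>v \<in> S\<close> N_S by (simp add: v1_def v2_def)
  ultimately have "S = UNIV"
    using span_UNIV vec.span_minimal[of "{v, v1, v2}" S] by auto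
  then show ?thesis unfolding S_def by blast
qed

lemma commute_if_commute_with_regular_nilpotent:
  fixes N A B :: "'a::field ^ 3 ^ 3"
  assumes "N ** N ** N = 0" "N ** N \<noteq> 0" "A ** N = N ** A" "B ** N = N ** B"
  shows "A ** B = B ** A"
proof -
  obtain a b c where B: "\<And>x. B *v x = a *s x + b *s (N *v x) + c *s (N *v (N *v x))"
    using centralizer_of_regular_nilpotent[OF assms(1,2,4)] by blast
  have "A *v (N *v x) = N *v (A *v x)" for x
    by (simp add: matrix_vector_mul_assoc assms(3))
  then have "(A ** B) *v x = (B ** A) *v x" for x
    by (simp add: matrix_vector_mul_assoc[symmetric] B matrix_vector_right_distrib vector_scalar_commute)
  then show ?thesis by (simp add: matrix_eq)
qed

lemma (in group) p_dvd_card_conjugation_orbit: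
  assumes "prime p" "order G = p ^ r" "x \<in> carrier G" "g \<in> carrier G" "g \<otimes> x \<noteq> x \<otimes> g"
  shows "p dvd card (orbit G (\<lambda>g. \<lambda>h\<in>carrier G. g \<otimes> h \<otimes> inv g) x)"
proof -
  define \<phi> where "\<phi> = (\<lambda>g. \<lambda>h\<in>carrier G. g \<otimes> h \<otimes> inv g)"
  interpret conj: group_action G "carrier G" \<phi>
    unfolding \<phi>_def by (rule action_by_conjugation)
  have "card (orbit G \<phi> x) dvd p ^ r"
    using conj.orbit_stabilizer_theorem[OF assms(3)] assms(2) by (metis dvd_triv_left)
  then obtain i where i: "card (orbit G \<phi> x) = p ^ i"
    using divides_primepow_nat[OF assms(1)] by auto
  have "i \<noteq> 0"
  proof
    assume "i = 0"
    then obtain y where "orbit G \<phi> x = {y}"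
      using i card_1_singletonE by auto
    then have "orbit G \<phi> x = {x}"
      using conj.orbit_refl[OF assms(3)] by simp
    moreover have "\<phi> g x \<in> orbit G \<phi> x"
      unfolding orbit_def using assms(4) by blast
    ultimately have "g \<otimes> x \<otimes> inv g = x"
      using assms(3) unfolding \<phi>_def by simp
    then show False
      using assms(3-5) by (metis inv_solve_right m_closed)
  qed
  then show ?thesis using i unfolding \<phi>_def by simp
qed

lemma (in group) p_group_center_nontrivial:
  assumes "prime p" "finite (carrier G)" "order G = p ^ r" "r > 0"
  shows "\<exists>z\<in>carrier G. z \<noteq> \<one> \<and> (\<forall>g\<in>carrier G. g \<otimes> z = z \<otimes> g)"
proof (rule ccontr)
  assume no_center: "\<not> ?thesis"
  define \<phi> where "\<phi> = (\<lambda>g. \<lambda>h\<in>carrier G. g \<otimes> h \<otimes> inv g)"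
  interpret conj: group_action G "carrier G" \<phi>
    unfolding \<phi>_def by (rule action_by_conjugation)
  have orbit_one: "orbit G \<phi> \<one> = {\<one>}"
    unfolding orbit_def \<phi>_def by (auto intro!: exI[of _ \<one>])
  have p_dvd_orbit: "p dvd card (orbit G \<phi> x)" if "x \<in> carrier G" "x \<noteq> \<one>" for x
    using p_dvd_card_conjugation_orbit[OF assms(1,3)] no_center that unfolding \<phi>_def by blast
  let ?others = "orbits G (carrier G) \<phi> - {{\<one>}}"
  have "finite (orbits G (carrier G) \<phi>)"
    using assms(2) conj.orbits_coverture by (metis finite_UnionD)
  moreover have "{\<one>} \<in> orbits G (carrier G) \<phi>"
    unfolding orbits_def using orbit_one by force
  ultimately have "(\<Sum>orb\<in>orbits G (carrier G) \<phi>. card orb) = 1 + (\<Sum>orb\<in>?others. card orb)"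
    by (simp add: sum.remove)
  also have "(\<Sum>orb\<in>orbits G (carrier G) \<phi>. card orb) = p ^ r"
    using conj.disjoint_sum[OF assms(2), of "\<lambda>_. 1::nat"] assms(3) by (simp add: order_def)
  finally have "p dvd 1 + (\<Sum>orb\<in>?others. card orb)"
    using assms(4) by (metis dvd_power)
  moreover have "p dvd (\<Sum>orb\<in>?others. card orb)"
    using orbit_one p_dvd_orbit by (intro dvd_sum) (auto simp: orbits_def)
  ultimately have "p dvd 1" by (simp only: dvd_add_left_iff)
  then show False using assms(1) by simp
qed

lemma coprime_diff_of_distinct_residues:
  assumes "prime p" "a \<in> {0..<int p}" "b \<in> {0..<int p}" "a \<noteq> b"
  shows "coprime (a - b) (int p)"
proof -
  have "\<not> int p dvd a - b"
    using assms(2-4) dvd_imp_le_int[of "a - b" "int p"] by auto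
  then show ?thesis
    using assms(1) by (simp add: prime_imp_coprime coprime_commute)
qed

lemma (in group) int_pow_mod_eq:
  assumes "y \<in> carrier G" "y [^] (p::nat) = \<one>"
  shows "y [^] (k mod int p) = y [^] k"
proof -
  have "int (ord y) dvd int p" using assms by (simp add: pow_eq_id)
  moreover have "int p dvd k - k mod int p" by (simp add: minus_mod_eq_mult_div)
  ultimately show ?thesis using assms(1) by (metis int_pow_eq dvd_trans)
qed

lemma (in group) mem_subgroup_if_coprime_power:
  assumes "subgroup H G" "y \<in> carrier G" "y [^] (p::nat) = \<one>" "coprime d (int p)" "y [^] d \<in> H"
  shows "y \<in> H"
proof -
  obtain u v where "u * d + v * int p = 1"
    using bezout_int[of d "int p"] assms(4) by auto
  then have "y = (y [^] d) [^] u \<otimes> (y [^] p) [^] v"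
    using assms(2) by (metis int_pow_1 int_pow_mult int_pow_pow int_pow_int mult.commute)
  also have "\<dots> = (y [^] d) [^] u"
    using assms(2,3) by simp
  finally show ?thesis
    using assms(1,5) by (metis subgroup_int_pow_closed)
qed

lemma (in group) eq_if_int_pow_diff_in_subgroup:
  assumes "prime p" "subgroup H G" "y \<in> carrier G" "y [^] p = \<one>" "y \<notin> H"
    and "i \<in> {0..<int p}" "j \<in> {0..<int p}" "y [^] (i - j) \<in> H"
  shows "i = j"
proof (rule ccontr)
  assume "i \<noteq> j"
  then have "coprime (i - j) (int p)"
    using coprime_diff_of_distinct_residues[OF assms(1,6,7)] by blast
  then have "y \<in> H"
    using mem_subgroup_if_coprime_power[OF assms(2-4) _ assms(8)] by blast
  with assms(5) show False ..
qed

lemma (in group) int_pow_diff_eq_if_mult_eq: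
  assumes "a \<in> carrier G" "b \<in> carrier G" "y \<in> carrier G" "a \<otimes> y [^] i = b \<otimes> y [^] (j::int)"
  shows "y [^] (i - j) = inv a \<otimes> b"
proof -
  have "b = (b \<otimes> y [^] j) \<otimes> inv (y [^] j)"
    using assms(2,3) by (simp add: m_assoc)
  also have "\<dots> = a \<otimes> (y [^] i \<otimes> inv (y [^] j))"
    unfolding assms(4)[symmetric] using assms(1,3) by (simp add: m_assoc)
  finally show ?thesis
    using assms(1,3) by (simp add: int_pow_diff inv_solve_left)
qed

abbreviation integer_mod_group_power :: "nat \<Rightarrow> nat \<Rightarrow> (nat \<Rightarrow> int) monoid" where
  "integer_mod_group_power p n \<equiv> product_group {..<n} (\<lambda>_. integer_mod_group p)"

lemma card_carrier_integer_mod_group_power: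
  "p > 0 \<Longrightarrow> card (carrier (integer_mod_group_power p n)) = p ^ n"
  by (simp add: carrier_integer_mod_group card_PiE)

lemma restrict_in_carrier_integer_mod_group_power:
  "f \<in> carrier (integer_mod_group_power p (Suc n)) \<Longrightarrow>
    restrict f {..<n} \<in> carrier (integer_mod_group_power p n)"
  by (auto simp: PiE_iff)

lemma integer_mod_group_power_Suc_eqI:
  assumes "f \<in> carrier (integer_mod_group_power p (Suc n))"
    and "g \<in> carrier (integer_mod_group_power p (Suc n))"
    and "restrict f {..<n} = restrict g {..<n}" "f n = g n"
  shows "f = g"
proof
  fix i
  consider "i < n" | "i = n" | "i \<notin> {..<Suc n}" by fastforce
  then show "f i = g i"
  proof cases
    case 1
    then show ?thesis using assms(3) by (metis restrict_apply' lessThan_iff)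
  next
    case 2
    then show ?thesis using assms(4) by simp
  next
    case 3
    then show ?thesis using assms(1,2) by (metis PiE_arb carrier_product_group)
  qed
qed

lemma (in comm_group) hom_extend_integer_mod_group_power:
  assumes "\<phi> \<in> hom (integer_mod_group_power p n) G" "y \<in> carrier G" "y [^] p = \<one>"
  shows "(\<lambda>f. \<phi> (restrict f {..<n}) \<otimes> y [^] f n) \<in> hom (integer_mod_group_power p (Suc n)) G"
proof -
  have \<phi>_closed: "\<phi> (restrict f {..<n}) \<in> carrier G"
    if "f \<in> carrier (integer_mod_group_power p (Suc n))" for f
    using hom_in_carrier[OF assms(1) restrict_in_carrier_integer_mod_group_power[OF that]] .
  show ?thesis
  proof (rule homI)
    fix f g
    assume f: "f \<in> carrier (integer_mod_group_power p (Suc n))"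
      and g: "g \<in> carrier (integer_mod_group_power p (Suc n))"
    let ?fg = "f \<otimes>\<^bsub>integer_mod_group_power p (Suc n)\<^esub> g"
    have "restrict ?fg {..<n} =
        restrict f {..<n} \<otimes>\<^bsub>integer_mod_group_power p n\<^esub> restrict g {..<n}"
      by (auto simp: fun_eq_iff)
    then have "\<phi> (restrict ?fg {..<n}) = \<phi> (restrict f {..<n}) \<otimes> \<phi> (restrict g {..<n})"
      using hom_mult[OF assms(1)] f g restrict_in_carrier_integer_mod_group_power by metis
    moreover have "y [^] ?fg n = y [^] f n \<otimes> y [^] g n"
      using assms(2,3) by (simp add: int_pow_mod_eq int_pow_mult)
    ultimately show "\<phi> (restrict ?fg {..<n}) \<otimes> y [^] ?fg n =
        (\<phi> (restrict f {..<n}) \<otimes> y [^] f n) \<otimes> (\<phi> (restrict g {..<n}) \<otimes> y [^] g n)"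
      using assms(2) \<phi>_closed[OF f] \<phi>_closed[OF g] by (simp add: m_ac)
  qed (use assms(2) \<phi>_closed in simp)
qed

lemma (in comm_group) inj_on_extend_integer_mod_group_power:
  assumes "prime p" "\<phi> \<in> hom (integer_mod_group_power p n) G"
    and "inj_on \<phi> (carrier (integer_mod_group_power p n))"
    and "y \<in> carrier G" "y [^] p = \<one>" "y \<notin> \<phi> ` carrier (integer_mod_group_power p n)"
  shows "inj_on (\<lambda>f. \<phi> (restrict f {..<n}) \<otimes> y [^] f n) (carrier (integer_mod_group_power p (Suc n)))"
proof (rule inj_onI)
  interpret \<phi>: group_hom "integer_mod_group_power p n" G \<phi>
    using assms(2) by (simp add: group_hom_def group_hom_axioms_def is_group)
  fix f g
  assume f: "f \<in> carrier (integer_mod_group_power p (Suc n))"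
    and g: "g \<in> carrier (integer_mod_group_power p (Suc n))"
    and eq: "\<phi> (restrict f {..<n}) \<otimes> y [^] f n = \<phi> (restrict g {..<n}) \<otimes> y [^] g n"
  define a where "a = restrict f {..<n}"
  define b where "b = restrict g {..<n}"
  have ab: "a \<in> carrier (integer_mod_group_power p n)" "b \<in> carrier (integer_mod_group_power p n)"
    unfolding a_def b_def using f g by (simp_all only: restrict_in_carrier_integer_mod_group_power)
  have "y [^] (f n - g n) = inv (\<phi> a) \<otimes> \<phi> b"
    using int_pow_diff_eq_if_mult_eq[OF \<phi>.hom_closed[OF ab(1)] \<phi>.hom_closed[OF ab(2)] assms(4)] eq
    unfolding a_def b_def by blast
  also have "\<dots> = \<phi> (inv\<^bsub>integer_mod_group_power p n\<^esub> a \<otimes>\<^bsub>integer_mod_group_power p n\<^esub> b)"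
    using ab by (metis \<phi>.hom_mult \<phi>.hom_inv \<phi>.G.inv_closed)
  finally have pow_in_image: "y [^] (f n - g n) \<in> \<phi> ` carrier (integer_mod_group_power p n)"
    using ab by (metis \<phi>.G.inv_closed \<phi>.G.m_closed image_eqI)
  have "carrier (integer_mod_group p) = {0..<int p}"
    using prime_gt_0_nat[OF assms(1)] by (simp add: carrier_integer_mod_group)
  then have "f n \<in> {0..<int p}" "g n \<in> {0..<int p}"
    using f g PiE_mem[of _ "{..<Suc n}" "\<lambda>_. carrier (integer_mod_group p)" n] by auto
  have "f n = g n"
    using eq_if_int_pow_diff_in_subgroup[OF assms(1) \<phi>.img_is_subgroup assms(4-6)]
      \<open>f n \<in> {0..<int p}\<close> \<open>g n \<in> {0..<int p}\<close> pow_in_image by blast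
  then have "\<phi> a \<otimes> y [^] g n = \<phi> b \<otimes> y [^] g n"
    using eq unfolding a_def b_def by simp
  then have "\<phi> a = \<phi> b"
    using right_cancel[OF int_pow_closed[OF assms(4)] \<phi>.hom_closed[OF ab(1)] \<phi>.hom_closed[OF ab(2)]]
    by blast
  then have "a = b" using assms(3) ab by (simp add: inj_on_eq_iff)
  with \<open>f n = g n\<close> show "f = g"
    using integer_mod_group_power_Suc_eqI[OF f g] unfolding a_def b_def by blast
qed

theorem (in comm_group) iso_integer_mod_group_power:
  assumes "prime p" "finite (carrier G)" "card (carrier G) = p ^ r"
    and "\<And>x. x \<in> carrier G \<Longrightarrow> x [^] p = \<one>"
  shows "G \<cong> integer_mod_group_power p r"
proof -
  have embedding: "\<exists>\<phi>. \<phi> \<in> hom (integer_mod_group_power p n) G \<and>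
      inj_on \<phi> (carrier (integer_mod_group_power p n))" if "n \<le> r" for n
    using that
  proof (induction n)
    case 0
    have "(\<lambda>_. \<one>) \<in> hom (integer_mod_group_power p 0) G" by (auto simp: hom_def)
    moreover have "inj_on (\<lambda>_. \<one>) (carrier (integer_mod_group_power p 0))" by (simp add: inj_on_def)
    ultimately show ?case by blast
  next
    case (Suc n)
    then obtain \<phi> where \<phi>: "\<phi> \<in> hom (integer_mod_group_power p n) G"
      "inj_on \<phi> (carrier (integer_mod_group_power p n))" by auto
    have "card (\<phi> ` carrier (integer_mod_group_power p n)) = p ^ n"
      using card_image[OF \<phi>(2)] card_carrier_integer_mod_group_power prime_gt_0_nat[OF assms(1)]
      by simp
    also have "\<dots> < card (carrier G)"
      using Suc.prems prime_gt_1_nat[OF assms(1)] assms(3) by (simp add: power_strict_increasing)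
    finally obtain y where "y \<in> carrier G" "y \<notin> \<phi> ` carrier (integer_mod_group_power p n)"
      using hom_carrier[OF \<phi>(1)] by (metis less_irrefl subsetI subset_antisym)
    then show ?case
      using hom_extend_integer_mod_group_power[OF \<phi>(1)]
        inj_on_extend_integer_mod_group_power[OF assms(1) \<phi>] assms(4) by blast
  qed
  then obtain \<phi> where \<phi>: "\<phi> \<in> hom (integer_mod_group_power p r) G"
    "inj_on \<phi> (carrier (integer_mod_group_power p r))" by blast
  have "card (\<phi> ` carrier (integer_mod_group_power p r)) = card (carrier G)"
    using card_image[OF \<phi>(2)] card_carrier_integer_mod_group_power prime_gt_0_nat[OF assms(1)] assms(3)
    by simp
  then have "\<phi> ` carrier (integer_mod_group_power p r) = carrier G"
    using hom_carrier[OF \<phi>(1)] assms(2) by (simp add: card_subset_eq)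
  then have "integer_mod_group_power p r \<cong> G"
    using \<phi> by (auto simp: is_iso_def iso_def bij_betw_def)
  then show ?thesis
    by (simp add: group.iso_sym)
qed

lemma SL3_3_subgroup_unipotent:
  fixes G :: "('a::field ^ 3 ^ 3) set"
  assumes "(3::'a) = 0" "subgroup G SL3" "finite G" "card G = 3 ^ r" "g \<in> G"
  shows "matrix_power (g - mat 1) 3 = 0" "matrix_power g 3 = mat 1"
proof -
  interpret H: group "SL3\<lparr>carrier := G\<rparr>"
    by (rule group.subgroup_imp_group[OF group_SL3 assms(2)])
  have "g [^]\<^bsub>SL3\<lparr>carrier := G\<rparr>\<^esub> order (SL3\<lparr>carrier := G\<rparr>) = \<one>\<^bsub>SL3\<lparr>carrier := G\<rparr>\<^esub>"
    using H.pow_order_eq_1 assms(3,5) by simp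
  then have "matrix_power g (3 ^ r) = mat 1"
    using assms(4) by (simp add: nat_pow_SL3 order_def)
  then show "matrix_power (g - mat 1) 3 = 0"
    using unipotent_if_power_3_power_eq_1[OF assms(1)] by fastforce
  then show "matrix_power g 3 = mat 1"
    using matrix_power_3_add_one[OF assms(1), of "g - mat 1"] by simp
qed

lemma small_SL3_3_subgroup_commute:
  fixes G :: "('a::field ^ 3 ^ 3) set"
  assumes "(3::'a) = 0" "subgroup G SL3" "finite G" "card G = 3 ^ r" "small G"
    and "g \<in> G" "h \<in> G"
  shows "g ** h = h ** g"
proof (cases "r = 0")
  case True
  then have "G = {mat 1}"
    using assms(4) subgroup.one_closed[OF assms(2)] by (auto simp: card_1_singleton_iff)
  then show ?thesis using assms(6,7) by simp
next
  case False
  interpret H: group "SL3\<lparr>carrier := G\<rparr>"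
    by (rule group.subgroup_imp_group[OF group_SL3 assms(2)])
  obtain z where z: "z \<in> G" "z \<noteq> mat 1" "\<And>g. g \<in> G \<Longrightarrow> g ** z = z ** g"
    using H.p_group_center_nontrivial[of 3 r] assms(3,4) False by (auto simp: order_def)
  define N where "N = z - mat 1"
  have "N ** N ** N = 0"
    using SL3_3_subgroup_unipotent(1)[OF assms(1-4) z(1)] by (simp add: N_def matrix_power_3)
  moreover have "N ** N \<noteq> 0"
    using pseudo_reflection_if_square_zero[OF z(2)] assms(5) z(1) by (auto simp: small_def N_def)
  moreover have "A ** N = N ** A" if "A \<in> G" for A
  proof -
    have "z = N + mat 1" by (simp add: N_def)
    then show ?thesis
      using z(3)[OF that] by (simp add: matrix_add_ldistrib matrix_add_rdistrib)
  qed
  ultimately show ?thesis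
    using commute_if_commute_with_regular_nilpotent assms(6,7) by blast
qed

theorem lemma6p2:
  fixes G :: "('a::field ^ 3 ^ 3) set" and r :: nat
  assumes "alg_closed TYPE('a)"
    and "CHAR('a) = 3"
    and "subgroup G SL3"
    and "finite G"
    and "card G = 3 ^ r"
    and "small G"
  shows "SL3\<lparr>carrier := G\<rparr> \<cong> product_group {..<r} (\<lambda>_. integer_mod_group 3)"
proof -
  have three: "(3::'a) = 0"
    using assms(2) by (metis of_nat_numeral of_nat_eq_0_iff_char_dvd dvd_refl)
  interpret H: group "SL3\<lparr>carrier := G\<rparr>"
    by (rule group.subgroup_imp_group[OF group_SL3 assms(3)])
  interpret H: comm_group "SL3\<lparr>carrier := G\<rparr>"
    using small_SL3_3_subgroup_commute[OF three assms(3-6)] by (intro H.group_comm_groupI) simp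
  show ?thesis
    using SL3_3_subgroup_unipotent(2)[OF three assms(3-5)] assms(4,5)
    by (intro H.iso_integer_mod_group_power) (simp_all add: nat_pow_SL3)
qed

end
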